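(* Let $v>0$ entrywise in $\mathbb{R}^{n\times m}$, $B\in\mathbb{R}^n_{>0}$, and let $\mathcal{B}$, $p(b)$, $\varphi$ be as in the QL-Shmyrev program with optimal value $\varphi^*$ and $p^*=p(b^* )$ for an optimal $(b^*,\delta^* )$. Let $b^0_{ij}=\delta^0_i=\frac{B_i}{m+1}$ for all $i,j$ and define mirror descent iterates $$(b^{t+1},\delta^{t+1})=\arg\min_{(b,\delta)\in\mathcal{B}}\ \langle\nabla\varphi(b^t),b-b^t\rangle+\sum_{i,j}b_{ij}\log\frac{b_{ij}}{b^t_{ij}}+\sum_i\delta_i\log\frac{\delta_i}{\delta^t_i}.$$ Then for all $t\ge1$, $D(p(b^t)\,\|\,p^* )\le\varphi(b^t)-\varphi^*\le\frac{\|B\|_1\log(m+1)}{t}$.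
   Context: QL-Shmyrev program: $\mathcal{B}=\{(b,\delta)\in\mathbb{R}^{n\times m}\times\mathbb{R}^n: b\ge0,\delta\ge0,\sum_jb_{ij}+\delta_i=B_i\ \forall i\}$, $p_j(b)=\sum_ib_{ij}$, $\varphi(b)=-\sum_{i,j}(1+\log v_{ij})b_{ij}+\sum_jp_j(b)\log p_j(b)$, minimized over $\mathcal{B}$; $\nabla\varphi(b)$ has entries $\log(p_j(b)/v_{ij})$. Generalized KL divergence for $p,q\in\mathbb{R}^d_+$: $D(p\|q)=\sum_ip_i\log\frac{p_i}{q_i}-\sum_ip_i+\sum_iq_i$, with $0\log0=0$. *)

theory Defs
  imports Main "HOL-Analysis.Analysis"
begin

text \<open>Buyers are indexed by a finite type 'i (n = CARD('i)), goods by a finite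
type 'j (m = CARD('j)). Conventions: ln 0 = 0 and x / 0 = 0 in Isabelle, so
0 * ln 0 = 0 as in the paper.\<close>

definition qls_feasible :: "('i::finite \<Rightarrow> real) \<Rightarrow> ('i \<Rightarrow> 'j::finite \<Rightarrow> real) \<Rightarrow> ('i \<Rightarrow> real) \<Rightarrow> bool" where
  "qls_feasible B b \<delta> \<longleftrightarrow>
     (\<forall>i j. 0 \<le> b i j) \<and> (\<forall>i. 0 \<le> \<delta> i) \<and> (\<forall>i. (\<Sum>j\<in>UNIV. b i j) + \<delta> i = B i)"

definition qls_price :: "('i::finite \<Rightarrow> 'j \<Rightarrow> real) \<Rightarrow> 'j \<Rightarrow> real" where
  "qls_price b j = (\<Sum>i\<in>UNIV. b i j)"

definition qls_phi :: "('i::finite \<Rightarrow> 'j::finite \<Rightarrow> real) \<Rightarrow> ('i \<Rightarrow> 'j \<Rightarrow> real) \<Rightarrow> real" where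
  "qls_phi v b = - (\<Sum>i\<in>UNIV. \<Sum>j\<in>UNIV. (1 + ln (v i j)) * b i j)
               + (\<Sum>j\<in>UNIV. qls_price b j * ln (qls_price b j))"

definition qls_grad :: "('i::finite \<Rightarrow> 'j::finite \<Rightarrow> real) \<Rightarrow> ('i \<Rightarrow> 'j \<Rightarrow> real) \<Rightarrow> 'i \<Rightarrow> 'j \<Rightarrow> real" where
  "qls_grad v b i j = ln (qls_price b j / v i j)"

definition md_obj :: "('i::finite \<Rightarrow> 'j::finite \<Rightarrow> real) \<Rightarrow> ('i \<Rightarrow> 'j \<Rightarrow> real) \<Rightarrow> ('i \<Rightarrow> real)
                      \<Rightarrow> ('i \<Rightarrow> 'j \<Rightarrow> real) \<Rightarrow> ('i \<Rightarrow> real) \<Rightarrow> real" where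
  "md_obj v bt dt b \<delta> =
     (\<Sum>i\<in>UNIV. \<Sum>j\<in>UNIV. qls_grad v bt i j * (b i j - bt i j))
   + (\<Sum>i\<in>UNIV. \<Sum>j\<in>UNIV. b i j * ln (b i j / bt i j))
   + (\<Sum>i\<in>UNIV. \<delta> i * ln (\<delta> i / dt i))"

definition gen_KL :: "('j::finite \<Rightarrow> real) \<Rightarrow> ('j \<Rightarrow> real) \<Rightarrow> real" where
  "gen_KL p q = (\<Sum>j\<in>UNIV. p j * ln (p j / q j)) - (\<Sum>j\<in>UNIV. p j) + (\<Sum>j\<in>UNIV. q j)"

end

theory Submission
  imports Defs
begin

text \<open>Mirror descent with the entropy of bids and leftover budgets as mirror map has a
  closed-form multiplicative step, characterised by a three-point identity. The Bregman
  divergence of \<open>\<phi>\<close> is exactly the KL divergence between the induced prices, which by the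
  log-sum inequality is at most the entropy divergence D of the bids: \<open>\<phi>\<close> is 1-smooth
  relative to the mirror map. Hence \<open>\<phi>(b(s+1)) \<le> \<phi>(u) + D(u, b s) - D(u, b(s+1))\<close> for
  every feasible u; the iterates decrease \<open>\<phi>\<close>, so this telescopes to the \<open>1/t\<close> rate, with
  \<open>D(b*, b 0) \<le> \<parallel>B\<parallel>\<^sub>1 log(m+1)\<close> for the uniform start. The lower bound is first-order
  optimality of b*, whose gradient exists because every optimal price is positive.\<close>

section \<open>The scalar KL divergence\<close>

definition kl_div :: "real \<Rightarrow> real \<Rightarrow> real" where
  "kl_div a c = a * ln (a / c) - a + c"

lemma kl_div_nonneg:
  assumes "0 \<le> a" "0 < c"
  shows "0 \<le> kl_div a c"
proof (cases "a = 0")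
  case True
  with assms show ?thesis by (simp add: kl_div_def)
next
  case False
  with assms have a: "0 < a" by simp
  have "a * ln (c / a) \<le> a * (c / a - 1)"
    using a assms by (intro mult_left_mono ln_le_minus_one) auto
  also have "\<dots> = c - a"
    using a by (simp add: field_simps)
  finally show ?thesis
    using a assms by (simp add: kl_div_def ln_div algebra_simps)
qed

lemma kl_div_eq_0_imp_eq:
  assumes "0 \<le> a" "0 < c" "kl_div a c = 0"
  shows "a = c"
proof (cases "a = 0")
  case True
  with assms show ?thesis by (simp add: kl_div_def)
next
  case False
  with assms have a: "0 < a" by simp
  have "ln (c / a) = - ln (a / c)"
    using a assms by (simp add: ln_div)
  also have "\<dots> = c / a - 1"
    using assms(3) a by (simp add: kl_div_def field_simps)
  finally have "c / a = 1"
    using ln_eq_minus_one[of "c / a"] a assms by simp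
  with a show ?thesis by simp
qed

lemma xlnx_diff_eq_kl_div:
  assumes "0 \<le> a" "0 < c"
  shows "a * ln a - c * ln c = (a - c) * (ln c + 1) + kl_div a c"
proof (cases "a = 0")
  case True
  then show ?thesis by (simp add: kl_div_def algebra_simps)
next
  case False
  with assms have "0 < a" by simp
  with assms show ?thesis by (simp add: kl_div_def ln_div algebra_simps)
qed

lemma kl_div_le_chi_square:
  assumes "0 \<le> a" "0 < c"
  shows "kl_div a c \<le> (a - c)\<^sup>2 / c"
proof (cases "a = 0")
  case True
  with assms show ?thesis by (simp add: kl_div_def power2_eq_square)
next
  case False
  with assms have a: "0 < a" by simp
  have "a * ln (a / c) \<le> a * (a / c - 1)"
    using a assms by (intro mult_left_mono ln_le_minus_one) auto
  moreover have "a * (a / c - 1) - a + c = (a - c)\<^sup>2 / c"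
    using assms by (simp add: field_simps power2_eq_square)
  ultimately show ?thesis by (simp add: kl_div_def)
qed

lemma mul_ln_div_split:
  fixes u x y :: real
  assumes "0 \<le> u" "0 < x" "0 < y"
  shows "u * ln (u / x) = u * ln (u / y) + u * ln (y / x)"
proof (cases "u = 0")
  case False
  with assms have "0 < u" by simp
  with assms show ?thesis by (simp add: ln_div algebra_simps)
qed simp

lemma kl_div_sum_le:
  assumes S: "finite S" and a: "\<And>k. k \<in> S \<Longrightarrow> 0 \<le> a k" and b: "\<And>k. k \<in> S \<Longrightarrow> 0 < b k"
  shows "kl_div (sum a S) (sum b S) \<le> (\<Sum>k\<in>S. kl_div (a k) (b k))"
proof (cases "sum a S = 0")
  case True
  then have "\<forall>k\<in>S. a k = 0"
    using sum_nonneg_eq_0_iff[OF S] a by blast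
  with True show ?thesis by (simp add: kl_div_def)
next
  case False
  then have A: "0 < sum a S"
    using sum_nonneg[of S a] a by (simp add: less_le)
  then have "S \<noteq> {}" by auto
  then have Bp: "0 < sum b S"
    using sum_pos[OF S] b by blast
  define r where "r = sum a S / sum b S"
  have r: "0 < r" using A Bp by (simp add: r_def)
  have "a k * ln r + a k - r * b k \<le> a k * ln (a k / b k)" if k: "k \<in> S" for k
  proof -
    have "0 \<le> kl_div (a k) (r * b k)"
      using a b k r by (intro kl_div_nonneg) auto
    moreover have "a k * ln (a k / b k) = a k * ln (a k / (r * b k)) + a k * ln r"
      using mul_ln_div_split[of "a k" "b k" "r * b k"] a[OF k] b[OF k] r by simp
    ultimately show ?thesis by (simp add: kl_div_def)
  qed
  then have "(\<Sum>k\<in>S. a k * ln r + a k - r * b k) \<le> (\<Sum>k\<in>S. a k * ln (a k / b k))"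
    by (rule sum_mono)
  moreover have "r * sum b S = sum a S"
    using Bp by (simp add: r_def)
  ultimately show ?thesis
    by (simp add: kl_div_def r_def sum.distrib sum_subtractf sum_distrib_left sum_distrib_right)
qed

section \<open>Prices and the objective\<close>

lemma gen_KL_eq_sum_kl_div: "gen_KL p q = (\<Sum>j\<in>UNIV. kl_div (p j) (q j))"
  by (simp add: gen_KL_def kl_div_def sum.distrib sum_subtractf)

lemma gen_KL_nonneg:
  assumes "\<And>j. 0 \<le> p j" "\<And>j. 0 < q j"
  shows "0 \<le> gen_KL p q"
  unfolding gen_KL_eq_sum_kl_div using assms by (intro sum_nonneg kl_div_nonneg)

lemma sum_bids_weighted_eq_prices:
  fixes u x :: "'i::finite \<Rightarrow> 'j::finite \<Rightarrow> real"
  shows "(\<Sum>i\<in>UNIV. \<Sum>j\<in>UNIV. w j * (u i j - x i j))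
       = (\<Sum>j\<in>UNIV. w j * (qls_price u j - qls_price x j))"
  by (subst sum.swap) (simp add: qls_price_def sum_distrib_left[symmetric] sum_subtractf)

lemma qls_price_nonneg: "qls_feasible B b \<delta> \<Longrightarrow> 0 \<le> qls_price b j"
  unfolding qls_price_def qls_feasible_def by (intro sum_nonneg) auto

lemma qls_price_pos: "(\<And>i j. 0 < b i j) \<Longrightarrow> 0 < qls_price b j"
  unfolding qls_price_def by (intro sum_pos) auto

lemma qls_feasible_le_budget:
  assumes "qls_feasible B b \<delta>"
  shows "b i j \<le> B i" and "\<delta> i \<le> B i"
proof -
  have nonneg: "\<And>j. 0 \<le> b i j" "0 \<le> \<delta> i" and budget: "(\<Sum>j\<in>UNIV. b i j) + \<delta> i = B i"
    using assms by (simp_all add: qls_feasible_def)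
  have "b i j \<le> (\<Sum>j\<in>UNIV. b i j)"
    using nonneg by (intro member_le_sum) auto
  with budget nonneg show "b i j \<le> B i" by linarith
  have "0 \<le> (\<Sum>j\<in>UNIV. b i j)"
    using nonneg by (intro sum_nonneg) auto
  with budget show "\<delta> i \<le> B i" by linarith
qed

lemma qls_feasible_uniform:
  fixes B :: "'i::finite \<Rightarrow> real"
  assumes "\<And>i. 0 \<le> B i"
  shows "qls_feasible B (\<lambda>i (j::'j::finite). B i / (real CARD('j) + 1))
                        (\<lambda>i. B i / (real CARD('j) + 1))"
proof -
  let ?m = "real CARD('j) + 1"
  have "real CARD('j) * (B i / ?m) + B i / ?m = ?m * (B i / ?m)" for i
    by (simp only: distrib_right mult_1_left)
  with assms show ?thesis by (simp add: qls_feasible_def)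
qed

lemma qls_feasible_segment:
  assumes x: "qls_feasible B x xd" and u: "qls_feasible B u ud" and e: "0 \<le> e" "e \<le> 1"
  shows "qls_feasible B (\<lambda>i j. x i j + e * (u i j - x i j)) (\<lambda>i. xd i + e * (ud i - xd i))"
proof -
  have convex: "0 \<le> s + e * (t - s)" if "0 \<le> s" "0 \<le> t" for s t :: real
  proof -
    have "s + e * (t - s) = (1 - e) * s + e * t" by (simp add: algebra_simps)
    with that e show ?thesis by simp
  qed
  have "(\<Sum>j\<in>UNIV. x i j + e * (u i j - x i j)) + (xd i + e * (ud i - xd i))
      = ((\<Sum>j\<in>UNIV. x i j) + xd i) + e * (((\<Sum>j\<in>UNIV. u i j) + ud i) - ((\<Sum>j\<in>UNIV. x i j) + xd i))" for i
    by (simp add: sum.distrib sum_distrib_left sum_subtractf algebra_simps)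
  with x u show ?thesis
    by (simp add: qls_feasible_def convex)
qed

lemma qls_price_segment:
  "qls_price (\<lambda>i j. x i j + e * (u i j - x i j)) j = qls_price x j + e * (qls_price u j - qls_price x j)"
  by (simp add: qls_price_def sum.distrib sum_distrib_left[symmetric] sum_subtractf)

lemma qls_phi_diff:
  "qls_phi v y - qls_phi v x = - (\<Sum>i\<in>UNIV. \<Sum>j\<in>UNIV. (1 + ln (v i j)) * (y i j - x i j))
     + (\<Sum>j\<in>UNIV. qls_price y j * ln (qls_price y j) - qls_price x j * ln (qls_price x j))"
  unfolding qls_phi_def by (simp add: sum_subtractf right_diff_distrib)

lemma qls_phi_bregman_eq_gen_KL:
  assumes v: "\<And>i j. 0 < v i j" and c: "\<And>j. 0 < qls_price x j" and a: "\<And>j. 0 \<le> qls_price u j"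
  shows "qls_phi v u - qls_phi v x - (\<Sum>i\<in>UNIV. \<Sum>j\<in>UNIV. qls_grad v x i j * (u i j - x i j))
       = gen_KL (qls_price u) (qls_price x)"
proof -
  let ?a = "qls_price u" and ?c = "qls_price x"
  let ?V = "\<Sum>i\<in>UNIV. \<Sum>j\<in>UNIV. ln (v i j) * (u i j - x i j)"
  have "qls_grad v x i j * (u i j - x i j) = ln (?c j) * (u i j - x i j) - ln (v i j) * (u i j - x i j)" for i j
    using c[of j] v[of i j] by (simp add: qls_grad_def ln_div left_diff_distrib)
  then have grad: "(\<Sum>i\<in>UNIV. \<Sum>j\<in>UNIV. qls_grad v x i j * (u i j - x i j))
      = (\<Sum>j\<in>UNIV. ln (?c j) * (?a j - ?c j)) - ?V"
    by (simp add: sum_subtractf sum_bids_weighted_eq_prices)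
  have lin: "(\<Sum>i\<in>UNIV. \<Sum>j\<in>UNIV. (1 + ln (v i j)) * (u i j - x i j)) = (\<Sum>j\<in>UNIV. ?a j - ?c j) + ?V"
    using sum_bids_weighted_eq_prices[of "\<lambda>_. 1" u x]
    by (simp add: distrib_right sum.distrib)
  have ent: "(\<Sum>j\<in>UNIV. ?a j * ln (?a j) - ?c j * ln (?c j))
      = (\<Sum>j\<in>UNIV. ln (?c j) * (?a j - ?c j)) + (\<Sum>j\<in>UNIV. ?a j - ?c j) + gen_KL ?a ?c"
    unfolding gen_KL_eq_sum_kl_div xlnx_diff_eq_kl_div[OF a c] sum.distrib[symmetric]
    by (simp add: algebra_simps)
  show ?thesis
    unfolding qls_phi_diff grad lin ent by simp
qed

section \<open>Optimality conditions\<close>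

lemma xlnx_segment_le:
  fixes a c e :: real
  assumes "0 \<le> a" "0 < c" "0 \<le> e" "e \<le> 1"
  shows "(c + e * (a - c)) * ln (c + e * (a - c)) - c * ln c
       \<le> e * ((a - c) * (ln c + 1) + (a - c)\<^sup>2 / c)"
proof -
  let ?y = "c + e * (a - c)"
  have "?y = (1 - e) * c + e * a" by (simp add: algebra_simps)
  with assms have y: "0 \<le> ?y" by simp
  have "kl_div ?y c \<le> (e * (a - c))\<^sup>2 / c"
    using kl_div_le_chi_square[OF y assms(2)] by simp
  also have "\<dots> = e * e * ((a - c)\<^sup>2 / c)"
    by (simp add: power2_eq_square)
  also have "\<dots> \<le> e * ((a - c)\<^sup>2 / c)"
    using assms by (intro mult_right_mono) (auto simp: mult_left_le)
  finally show ?thesis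
    unfolding xlnx_diff_eq_kl_div[OF y assms(2)] by (simp add: algebra_simps)
qed

lemma ex_ln_mult_below:
  fixes A X :: real
  assumes "0 < A"
  shows "\<exists>e. 0 < e \<and> e \<le> 1 \<and> X + A * ln e < 0"
proof (intro exI conjI)
  let ?e = "exp (- (\<bar>X\<bar> + 1) / A)"
  show "0 < ?e" by simp
  show "?e \<le> 1"
    using assms by (simp add: divide_nonpos_pos)
  show "X + A * ln ?e < 0"
    using assms by simp
qed

lemma nonneg_of_nonneg_perturbation:
  fixes G K :: real
  assumes "\<And>e. 0 < e \<Longrightarrow> e \<le> 1 \<Longrightarrow> 0 \<le> G + e * K"
  shows "0 \<le> G"
proof (rule tendsto_lowerbound)
  show "((\<lambda>e. G + e * K) \<longlongrightarrow> G) (at_right 0)"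
    by (auto intro!: tendsto_eq_intros)
  show "\<forall>\<^sub>F e in at_right 0. 0 \<le> G + e * K"
    using eventually_at_right_real[OF zero_less_one] by eventually_elim (auto intro: assms)
qed simp

text \<open>An optimal solution never leaves a good unsold: along the segment towards a
  point selling every good, the entropy term of a good with price 0 decreases at
  rate \<open>-ln e\<close>, which no other term can compensate.\<close>
lemma qls_optimal_price_pos:
  fixes bopt :: "'i::finite \<Rightarrow> 'j::finite \<Rightarrow> real"
  assumes B_pos: "\<And>i. 0 < B i"
    and opt_feas: "qls_feasible B bopt dopt"
    and opt_min: "\<And>b' d'. qls_feasible B b' d' \<Longrightarrow> qls_phi v bopt \<le> qls_phi v b'"
  shows "0 < qls_price bopt j"
proof (rule ccontr)
  define w :: "'i \<Rightarrow> 'j \<Rightarrow> real" where "w i k = B i / (real CARD('j) + 1)" for i k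
  define wd :: "'i \<Rightarrow> real" where "wd i = B i / (real CARD('j) + 1)" for i
  define a where "a = qls_price w"
  define c where "c = qls_price bopt"
  define L where "L = - (\<Sum>i\<in>UNIV. \<Sum>k\<in>UNIV. (1 + ln (v i k)) * (w i k - bopt i k))"
  define h where "h k = (if c k = 0 then a k * ln (a k)
                         else (a k - c k) * (ln (c k) + 1) + (a k - c k)\<^sup>2 / c k)" for k
  define A where "A = (\<Sum>k\<in>UNIV. if c k = 0 then a k else 0)"
  have w_feas: "qls_feasible B w wd"
    unfolding w_def wd_def using B_pos by (intro qls_feasible_uniform less_imp_le)
  have a_pos: "0 < a k" for k
    unfolding a_def using B_pos by (intro qls_price_pos) (simp add: w_def)
  have c_nonneg: "0 \<le> c k" for k
    unfolding c_def by (rule qls_price_nonneg[OF opt_feas])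
  assume "\<not> 0 < qls_price bopt j"
  then have "c j = 0" using c_nonneg[of j] by (simp add: c_def)
  then have A_pos: "0 < A"
    unfolding A_def using a_pos by (intro sum_pos2[of _ j]) (auto intro: less_imp_le)
  have "0 \<le> L + sum h UNIV + A * ln e" if e: "0 < e" "e \<le> 1" for e
  proof -
    define y where "y i k = bopt i k + e * (w i k - bopt i k)" for i k
    define yd where "yd i = dopt i + e * (wd i - dopt i)" for i
    have entry: "(c k + e * (a k - c k)) * ln (c k + e * (a k - c k)) - c k * ln (c k)
        \<le> e * h k + e * ((if c k = 0 then a k else 0) * ln e)" for k
    proof (cases "c k = 0")
      case True
      then show ?thesis
        using a_pos[of k] e by (simp add: h_def ln_mult algebra_simps)
    next
      case False
      then show ?thesis
        using xlnx_segment_le[of "a k" "c k" e] a_pos[of k] c_nonneg[of k] e by (simp add: h_def)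
    qed
    have "qls_feasible B y yd"
      unfolding y_def yd_def using opt_feas w_feas e by (intro qls_feasible_segment) auto
    then have "0 \<le> qls_phi v y - qls_phi v bopt"
      using opt_min by simp
    also have "\<dots> = e * L + (\<Sum>k\<in>UNIV. (c k + e * (a k - c k)) * ln (c k + e * (a k - c k))
                                        - c k * ln (c k))"
      unfolding qls_phi_diff y_def qls_price_segment a_def c_def L_def
      by (simp add: sum_distrib_left algebra_simps)
    also have "\<dots> \<le> e * L + (\<Sum>k\<in>UNIV. e * h k + e * ((if c k = 0 then a k else 0) * ln e))"
      using entry by (intro add_left_mono sum_mono)
    also have "\<dots> = e * (L + sum h UNIV + A * ln e)"
      by (simp add: A_def sum.distrib sum_distrib_left sum_distrib_right distrib_left)
    finally show ?thesis
      using e by (simp add: zero_le_mult_iff)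
  qed
  moreover obtain e where "0 < e" "e \<le> 1" "L + sum h UNIV + A * ln e < 0"
    using ex_ln_mult_below[OF A_pos] by blast
  ultimately show False by fastforce
qed

lemma qls_first_order_optimality:
  fixes bopt u :: "'i::finite \<Rightarrow> 'j::finite \<Rightarrow> real"
  assumes v_pos: "\<And>i j. 0 < v i j"
    and c_pos: "\<And>j. 0 < qls_price bopt j"
    and opt_feas: "qls_feasible B bopt dopt"
    and opt_min: "\<And>b' d'. qls_feasible B b' d' \<Longrightarrow> qls_phi v bopt \<le> qls_phi v b'"
    and u_feas: "qls_feasible B u ud"
  shows "0 \<le> (\<Sum>i\<in>UNIV. \<Sum>j\<in>UNIV. qls_grad v bopt i j * (u i j - bopt i j))"
proof (rule nonneg_of_nonneg_perturbation
         [where K = "\<Sum>j\<in>UNIV. (qls_price u j - qls_price bopt j)\<^sup>2 / qls_price bopt j"])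
  fix e :: real
  assume e: "0 < e" "e \<le> 1"
  let ?G = "\<Sum>i\<in>UNIV. \<Sum>j\<in>UNIV. qls_grad v bopt i j * (u i j - bopt i j)"
  let ?a = "qls_price u" and ?c = "qls_price bopt"
  define y where "y i j = bopt i j + e * (u i j - bopt i j)" for i j
  define yd where "yd i = dopt i + e * (ud i - dopt i)" for i
  have y_feas: "qls_feasible B y yd"
    unfolding y_def yd_def using opt_feas u_feas e by (intro qls_feasible_segment) auto
  have "0 \<le> qls_phi v y - qls_phi v bopt"
    using opt_min[OF y_feas] by simp
  also have "\<dots> = e * ?G + gen_KL (qls_price y) ?c"
    using qls_phi_bregman_eq_gen_KL[of v bopt y, OF v_pos c_pos qls_price_nonneg[OF y_feas]]
    by (simp add: y_def sum_distrib_left algebra_simps)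
  also have "gen_KL (qls_price y) ?c \<le> (\<Sum>j\<in>UNIV. (e * (?a j - ?c j))\<^sup>2 / ?c j)"
    unfolding gen_KL_eq_sum_kl_div
  proof (intro sum_mono)
    fix j
    have "qls_price y j = ?c j + e * (?a j - ?c j)"
      unfolding y_def by (rule qls_price_segment)
    then show "kl_div (qls_price y j) (?c j) \<le> (e * (?a j - ?c j))\<^sup>2 / ?c j"
      using kl_div_le_chi_square[OF qls_price_nonneg[OF y_feas, of j] c_pos[of j]] by simp
  qed
  also have "\<dots> = e * (e * (\<Sum>j\<in>UNIV. (?a j - ?c j)\<^sup>2 / ?c j))"
    by (simp add: sum_distrib_left power_mult_distrib power2_eq_square[of e] mult.assoc)
  finally show "0 \<le> ?G + e * (\<Sum>j\<in>UNIV. (?a j - ?c j)\<^sup>2 / ?c j)"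
    using e by (simp add: zero_le_mult_iff flip: distrib_left)
qed

lemma qls_gen_KL_le_phi_gap:
  fixes bopt u :: "'i::finite \<Rightarrow> 'j::finite \<Rightarrow> real"
  assumes v_pos: "\<And>i j. 0 < v i j"
    and B_pos: "\<And>i. 0 < B i"
    and opt_feas: "qls_feasible B bopt dopt"
    and opt_min: "\<And>b' d'. qls_feasible B b' d' \<Longrightarrow> qls_phi v bopt \<le> qls_phi v b'"
    and u_feas: "qls_feasible B u ud"
  shows "gen_KL (qls_price u) (qls_price bopt) \<le> qls_phi v u - qls_phi v bopt"
proof -
  have c_pos: "\<And>j. 0 < qls_price bopt j"
    using qls_optimal_price_pos[OF B_pos opt_feas opt_min] .
  have "0 \<le> (\<Sum>i\<in>UNIV. \<Sum>j\<in>UNIV. qls_grad v bopt i j * (u i j - bopt i j))"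
    using v_pos c_pos opt_feas opt_min u_feas by (rule qls_first_order_optimality)
  with qls_phi_bregman_eq_gen_KL[of v bopt u, OF v_pos c_pos qls_price_nonneg[OF u_feas]]
  show ?thesis by linarith
qed

section \<open>The entropic mirror step\<close>

text \<open>Written without the linear terms of \<open>kl_div\<close>, as in \<open>md_obj\<close>; they cancel
  between two points with the same budgets.\<close>
definition bid_kl :: "('i::finite \<Rightarrow> 'j::finite \<Rightarrow> real) \<Rightarrow> ('i \<Rightarrow> real)
                      \<Rightarrow> ('i \<Rightarrow> 'j \<Rightarrow> real) \<Rightarrow> ('i \<Rightarrow> real) \<Rightarrow> real" where
  "bid_kl u ud y yd = (\<Sum>i\<in>UNIV. \<Sum>j\<in>UNIV. u i j * ln (u i j / y i j))
                    + (\<Sum>i\<in>UNIV. ud i * ln (ud i / yd i))"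

lemma bid_kl_self: "bid_kl y yd y yd = 0"
proof -
  have "x * ln (x / x) = 0" for x :: real
    by (cases "x = 0") simp_all
  then show ?thesis
    unfolding bid_kl_def by (simp only:) simp
qed

lemma bid_kl_eq_sum_kl_div:
  assumes "qls_feasible B u ud" "qls_feasible B y yd"
  shows "bid_kl u ud y yd = (\<Sum>i\<in>UNIV. (\<Sum>j\<in>UNIV. kl_div (u i j) (y i j)) + kl_div (ud i) (yd i))"
proof -
  have "(\<Sum>j\<in>UNIV. kl_div (u i j) (y i j)) + kl_div (ud i) (yd i)
      = (\<Sum>j\<in>UNIV. u i j * ln (u i j / y i j)) + ud i * ln (ud i / yd i)
        - ((\<Sum>j\<in>UNIV. u i j) + ud i) + ((\<Sum>j\<in>UNIV. y i j) + yd i)" for i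
    by (simp add: kl_div_def sum.distrib sum_subtractf)
  with assms show ?thesis
    by (simp add: bid_kl_def qls_feasible_def sum.distrib)
qed

lemma bid_kl_nonneg:
  assumes "qls_feasible B u ud" "qls_feasible B y yd" "\<And>i j. 0 < y i j" "\<And>i. 0 < yd i"
  shows "0 \<le> bid_kl u ud y yd"
  unfolding bid_kl_eq_sum_kl_div[OF assms(1,2)] using assms
  by (auto intro!: sum_nonneg add_nonneg_nonneg kl_div_nonneg simp: qls_feasible_def)

lemma bid_kl_eq_0_imp_eq:
  assumes u: "qls_feasible B u ud" and y: "qls_feasible B y yd"
    and y_pos: "\<And>i j. 0 < y i j" and yd_pos: "\<And>i. 0 < yd i"
    and "bid_kl u ud y yd = 0"
  shows "u = y" "ud = yd"
proof -
  have u_nonneg: "0 \<le> u i j" "0 \<le> ud i" for i j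
    using u by (simp_all add: qls_feasible_def)
  have bid_nonneg: "\<forall>j\<in>UNIV. 0 \<le> kl_div (u i j) (y i j)" for i
    using u_nonneg y_pos by (simp add: kl_div_nonneg)
  have left_nonneg: "0 \<le> kl_div (ud i) (yd i)" for i
    using u_nonneg yd_pos by (simp add: kl_div_nonneg)
  have "\<forall>i\<in>UNIV. (\<Sum>j\<in>UNIV. kl_div (u i j) (y i j)) + kl_div (ud i) (yd i) = 0"
    using assms(5) bid_kl_eq_sum_kl_div[OF u y] bid_nonneg left_nonneg
    by (subst sum_nonneg_eq_0_iff[symmetric]) (auto intro!: add_nonneg_nonneg sum_nonneg)
  then have "(\<Sum>j\<in>UNIV. kl_div (u i j) (y i j)) = 0" "kl_div (ud i) (yd i) = 0" for i
    using bid_nonneg left_nonneg by (simp_all add: add_nonneg_eq_0_iff sum_nonneg)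
  then have "kl_div (u i j) (y i j) = 0" "kl_div (ud i) (yd i) = 0" for i j
    using bid_nonneg by (simp_all add: sum_nonneg_eq_0_iff)
  then show "u = y" "ud = yd"
    using u_nonneg y_pos yd_pos by (auto simp: fun_eq_iff intro: kl_div_eq_0_imp_eq)
qed

lemma gen_KL_price_le_bid_kl:
  assumes Y: "qls_feasible B Y Yd" and X: "qls_feasible B X D"
    and X_pos: "\<And>i j. 0 < X i j" and D_pos: "\<And>i. 0 < D i"
  shows "gen_KL (qls_price Y) (qls_price X) \<le> bid_kl Y Yd X D"
proof -
  have Y_nonneg: "0 \<le> Y i j" "0 \<le> Yd i" for i j
    using Y by (simp_all add: qls_feasible_def)
  have "gen_KL (qls_price Y) (qls_price X) \<le> (\<Sum>j\<in>UNIV. \<Sum>i\<in>UNIV. kl_div (Y i j) (X i j))"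
    unfolding gen_KL_eq_sum_kl_div qls_price_def
    using Y_nonneg X_pos by (intro sum_mono kl_div_sum_le) auto
  also have "\<dots> = (\<Sum>i\<in>UNIV. \<Sum>j\<in>UNIV. kl_div (Y i j) (X i j))"
    by (rule sum.swap)
  also have "\<dots> \<le> (\<Sum>i\<in>UNIV. (\<Sum>j\<in>UNIV. kl_div (Y i j) (X i j)) + kl_div (Yd i) (D i))"
    using Y_nonneg D_pos by (intro sum_mono) (simp add: kl_div_nonneg)
  also have "\<dots> = bid_kl Y Yd X D"
    using bid_kl_eq_sum_kl_div[OF Y X] by simp
  finally show ?thesis .
qed

definition entropic_obj :: "('i::finite \<Rightarrow> 'j::finite \<Rightarrow> real) \<Rightarrow> ('i \<Rightarrow> 'j \<Rightarrow> real) \<Rightarrow> ('i \<Rightarrow> real)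
                           \<Rightarrow> ('i \<Rightarrow> 'j \<Rightarrow> real) \<Rightarrow> ('i \<Rightarrow> real) \<Rightarrow> real" where
  "entropic_obj g X D u ud = (\<Sum>i\<in>UNIV. \<Sum>j\<in>UNIV. g i j * (u i j - X i j)) + bid_kl u ud X D"

definition entropic_norm :: "('i::finite \<Rightarrow> 'j::finite \<Rightarrow> real) \<Rightarrow> ('i \<Rightarrow> 'j \<Rightarrow> real) \<Rightarrow> ('i \<Rightarrow> real)
                            \<Rightarrow> 'i \<Rightarrow> real" where
  "entropic_norm g X D i = (\<Sum>j\<in>UNIV. X i j * exp (- g i j)) + D i"

definition entropic_step_bid :: "('i::finite \<Rightarrow> real) \<Rightarrow> ('i \<Rightarrow> 'j::finite \<Rightarrow> real)
                                \<Rightarrow> ('i \<Rightarrow> 'j \<Rightarrow> real) \<Rightarrow> ('i \<Rightarrow> real) \<Rightarrow> 'i \<Rightarrow> 'j \<Rightarrow> real" where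
  "entropic_step_bid B g X D i j = B i * (X i j * exp (- g i j)) / entropic_norm g X D i"

definition entropic_step_left :: "('i::finite \<Rightarrow> real) \<Rightarrow> ('i \<Rightarrow> 'j::finite \<Rightarrow> real)
                                 \<Rightarrow> ('i \<Rightarrow> 'j \<Rightarrow> real) \<Rightarrow> ('i \<Rightarrow> real) \<Rightarrow> 'i \<Rightarrow> real" where
  "entropic_step_left B g X D i = B i * D i / entropic_norm g X D i"

lemma md_obj_eq_entropic_obj: "md_obj v X D = entropic_obj (qls_grad v X) X D"
  by (simp add: fun_eq_iff md_obj_def entropic_obj_def bid_kl_def)

context
  fixes B :: "'i::finite \<Rightarrow> real" and g X :: "'i \<Rightarrow> 'j::finite \<Rightarrow> real" and D :: "'i \<Rightarrow> real"
  assumes B_pos: "\<And>i. 0 < B i" and X_pos: "\<And>i j. 0 < X i j" and D_pos: "\<And>i. 0 < D i"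
begin

lemma entropic_norm_pos: "0 < entropic_norm g X D i"
  unfolding entropic_norm_def using D_pos X_pos
  by (intro add_nonneg_pos sum_nonneg) (auto intro: less_imp_le)

lemma entropic_step_pos:
  "0 < entropic_step_bid B g X D i j" "0 < entropic_step_left B g X D i"
  unfolding entropic_step_bid_def entropic_step_left_def
  using B_pos X_pos D_pos entropic_norm_pos by simp_all

lemma entropic_step_feasible:
  "qls_feasible B (entropic_step_bid B g X D) (entropic_step_left B g X D)"
proof -
  have "(\<Sum>j\<in>UNIV. entropic_step_bid B g X D i j) + entropic_step_left B g X D i
      = B i * entropic_norm g X D i / entropic_norm g X D i" for i
    by (simp add: entropic_step_bid_def entropic_step_left_def entropic_norm_def
                  sum_divide_distrib[symmetric] sum_distrib_left[symmetric] add_divide_distrib distrib_left)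
  also have "\<dots> i = B i" for i
    using entropic_norm_pos[of i] by simp
  finally show ?thesis
    using entropic_step_pos entropic_norm_pos by (simp add: qls_feasible_def less_imp_le)
qed

lemma entropic_obj_eq_bid_kl_step:
  assumes u: "qls_feasible B u ud"
  shows "entropic_obj g X D u ud
       = (\<Sum>i\<in>UNIV. B i * ln (B i / entropic_norm g X D i) - (\<Sum>j\<in>UNIV. g i j * X i j))
         + bid_kl u ud (entropic_step_bid B g X D) (entropic_step_left B g X D)"
proof -
  let ?Z = "entropic_norm g X D" and ?C = "entropic_step_bid B g X D"
    and ?Cd = "entropic_step_left B g X D"
  have u_nonneg: "0 \<le> u i j" "0 \<le> ud i" for i j
    using u by (simp_all add: qls_feasible_def)
  have "ln (?C i j / X i j) = ln (B i / ?Z i * exp (- g i j))" for i j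
    using X_pos[of i j] by (simp add: entropic_step_bid_def)
  also have "\<dots> i j = ln (B i / ?Z i) - g i j" for i j
    using B_pos[of i] entropic_norm_pos[of i] by (subst ln_mult) auto
  finally have bid_ratio: "ln (?C i j / X i j) = ln (B i / ?Z i) - g i j" for i j .
  have bid: "g i j * (u i j - X i j) + u i j * ln (u i j / X i j)
      = u i j * ln (u i j / ?C i j) + u i j * ln (B i / ?Z i) - g i j * X i j" for i j
    using mul_ln_div_split[OF u_nonneg(1)[of i j] X_pos[of i j] entropic_step_pos(1)[of i j]]
    unfolding bid_ratio by (simp add: algebra_simps)
  have left_ratio: "?Cd i / D i = B i / ?Z i" for i
    using D_pos[of i] by (simp add: entropic_step_left_def)
  have left: "ud i * ln (ud i / D i) = ud i * ln (ud i / ?Cd i) + ud i * ln (B i / ?Z i)" for i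
    using mul_ln_div_split[OF u_nonneg(2)[of i] D_pos[of i] entropic_step_pos(2)[of i]]
    unfolding left_ratio .
  have budget: "(\<Sum>j\<in>UNIV. u i j) + ud i = B i" for i
    using u by (simp add: qls_feasible_def)
  have per_buyer: "(\<Sum>j\<in>UNIV. g i j * (u i j - X i j)) + (\<Sum>j\<in>UNIV. u i j * ln (u i j / X i j))
        + ud i * ln (ud i / D i)
      = (\<Sum>j\<in>UNIV. u i j * ln (u i j / ?C i j)) + ud i * ln (ud i / ?Cd i)
        + (B i * ln (B i / ?Z i) - (\<Sum>j\<in>UNIV. g i j * X i j))" for i
    unfolding budget[of i, symmetric] sum.distrib[symmetric] bid left
    by (simp add: sum.distrib sum_subtractf sum_distrib_right algebra_simps)
  have "entropic_obj g X D u ud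
      = (\<Sum>i\<in>UNIV. (\<Sum>j\<in>UNIV. g i j * (u i j - X i j)) + (\<Sum>j\<in>UNIV. u i j * ln (u i j / X i j))
                     + ud i * ln (ud i / D i))"
    by (simp add: entropic_obj_def bid_kl_def sum.distrib)
  also have "\<dots> = (\<Sum>i\<in>UNIV. B i * ln (B i / ?Z i) - (\<Sum>j\<in>UNIV. g i j * X i j)) + bid_kl u ud ?C ?Cd"
    unfolding per_buyer by (simp add: bid_kl_def sum.distrib)
  finally show ?thesis .
qed

lemma entropic_obj_minimizer_eq_step:
  assumes Y: "qls_feasible B Y Yd"
    and Y_min: "\<And>u ud. qls_feasible B u ud \<Longrightarrow> entropic_obj g X D Y Yd \<le> entropic_obj g X D u ud"
  shows "Y = entropic_step_bid B g X D" "Yd = entropic_step_left B g X D"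
proof -
  let ?C = "entropic_step_bid B g X D" and ?Cd = "entropic_step_left B g X D"
  have "bid_kl Y Yd ?C ?Cd \<le> bid_kl ?C ?Cd ?C ?Cd"
    using Y_min[OF entropic_step_feasible]
    unfolding entropic_obj_eq_bid_kl_step[OF Y] entropic_obj_eq_bid_kl_step[OF entropic_step_feasible]
    by simp
  moreover have "0 \<le> bid_kl Y Yd ?C ?Cd"
    using Y entropic_step_feasible entropic_step_pos by (rule bid_kl_nonneg)
  ultimately have "bid_kl Y Yd ?C ?Cd = 0"
    by (simp add: bid_kl_self)
  then show "Y = ?C" "Yd = ?Cd"
    using bid_kl_eq_0_imp_eq[OF Y entropic_step_feasible entropic_step_pos] by simp_all
qed

lemma entropic_obj_three_point:
  assumes Y: "qls_feasible B Y Yd"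
    and Y_min: "\<And>u ud. qls_feasible B u ud \<Longrightarrow> entropic_obj g X D Y Yd \<le> entropic_obj g X D u ud"
    and u: "qls_feasible B u ud"
  shows "entropic_obj g X D u ud = entropic_obj g X D Y Yd + bid_kl u ud Y Yd"
  using entropic_obj_eq_bid_kl_step[OF u] entropic_obj_eq_bid_kl_step[OF Y]
    entropic_obj_minimizer_eq_step[OF Y Y_min] by (simp add: bid_kl_self)

end

section \<open>Convergence\<close>

lemma md_step_pos:
  assumes B_pos: "\<And>i. 0 < B i" and X_pos: "\<And>i j. 0 < X i j" and D_pos: "\<And>i. 0 < D i"
    and Y: "qls_feasible B Y Yd"
    and Y_min: "\<And>u ud. qls_feasible B u ud \<Longrightarrow> md_obj v X D Y Yd \<le> md_obj v X D u ud"
  shows "0 < Y i j" "0 < Yd i"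
  using entropic_obj_minimizer_eq_step[OF B_pos X_pos D_pos Y Y_min[unfolded md_obj_eq_entropic_obj]]
    entropic_step_pos[OF B_pos X_pos D_pos]
  by simp_all

lemma md_iterates_pos:
  assumes B_pos: "\<And>i. 0 < B i"
    and init_pos: "\<And>i j. 0 < b 0 i j" "\<And>i. 0 < d 0 i"
    and step_feas: "\<And>s. qls_feasible B (b (Suc s)) (d (Suc s))"
    and step_min: "\<And>s b' d'. qls_feasible B b' d' \<Longrightarrow>
                     md_obj v (b s) (d s) (b (Suc s)) (d (Suc s)) \<le> md_obj v (b s) (d s) b' d'"
  shows "(\<forall>i j. 0 < b s i j) \<and> (\<forall>i. 0 < d s i)"
proof (induction s)
  case (Suc s)
  then show ?case
    using md_step_pos[OF B_pos _ _ step_feas step_min] by blast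
qed (use init_pos in blast)

lemma md_descent:
  assumes v_pos: "\<And>i j. 0 < v i j" and B_pos: "\<And>i. 0 < B i"
    and X_pos: "\<And>i j. 0 < X i j" and D_pos: "\<And>i. 0 < D i"
    and X: "qls_feasible B X D" and Y: "qls_feasible B Y Yd"
    and Y_min: "\<And>u ud. qls_feasible B u ud \<Longrightarrow> md_obj v X D Y Yd \<le> md_obj v X D u ud"
    and u: "qls_feasible B u ud"
  shows "qls_phi v Y \<le> qls_phi v u + bid_kl u ud X D - bid_kl u ud Y Yd"
proof -
  let ?G = "\<lambda>w. \<Sum>i\<in>UNIV. \<Sum>j\<in>UNIV. qls_grad v X i j * (w i j - X i j)"
  have X_price: "\<And>j. 0 < qls_price X j"
    using X_pos by (rule qls_price_pos)
  have "qls_phi v Y = qls_phi v X + ?G Y + gen_KL (qls_price Y) (qls_price X)"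
    using qls_phi_bregman_eq_gen_KL[of v X Y, OF v_pos X_price qls_price_nonneg[OF Y]] by simp
  also have "\<dots> \<le> qls_phi v X + ?G Y + bid_kl Y Yd X D"
    using gen_KL_price_le_bid_kl[OF Y X X_pos D_pos] by simp
  also have "\<dots> = qls_phi v X + entropic_obj (qls_grad v X) X D Y Yd"
    by (simp add: entropic_obj_def)
  also have "\<dots> = qls_phi v X + entropic_obj (qls_grad v X) X D u ud - bid_kl u ud Y Yd"
    using entropic_obj_three_point[OF B_pos X_pos D_pos Y Y_min[unfolded md_obj_eq_entropic_obj] u]
    by simp
  also have "\<dots> = qls_phi v X + ?G u + bid_kl u ud X D - bid_kl u ud Y Yd"
    by (simp add: entropic_obj_def)
  also have "\<dots> \<le> qls_phi v u + bid_kl u ud X D - bid_kl u ud Y Yd"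
    using qls_phi_bregman_eq_gen_KL[of v X u, OF v_pos X_price qls_price_nonneg[OF u]]
      gen_KL_nonneg[of "qls_price u" "qls_price X", OF qls_price_nonneg[OF u] X_price]
    by simp
  finally show ?thesis .
qed

lemma monotone_descent_rate:
  fixes f K :: "nat \<Rightarrow> real"
  assumes mono: "\<And>s. f (Suc s) \<le> f s"
    and step: "\<And>s. f (Suc s) \<le> c + K s - K (Suc s)"
    and K_nonneg: "\<And>s. 0 \<le> K s"
  shows "real t * (f t - c) \<le> K 0"
proof -
  have "real t * f t \<le> real t * c + K 0 - K t"
  proof (induction t)
    case (Suc t)
    have "real t * f (Suc t) \<le> real t * f t"
      using mono by (intro mult_left_mono) auto
    with Suc.IH step[of t] show ?case
      by (simp add: algebra_simps)
  qed simp
  with K_nonneg[of t] show ?thesis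
    by (simp add: algebra_simps)
qed

lemma bid_kl_uniform_le:
  fixes B :: "'i::finite \<Rightarrow> real" and u :: "'i \<Rightarrow> 'j::finite \<Rightarrow> real"
  assumes B_pos: "\<And>i. 0 < B i" and u: "qls_feasible B u ud"
  shows "bid_kl u ud (\<lambda>i j. B i / (real CARD('j) + 1)) (\<lambda>i. B i / (real CARD('j) + 1))
       \<le> (\<Sum>i\<in>UNIV. B i) * ln (real CARD('j) + 1)"
proof -
  let ?m = "real CARD('j) + 1"
  have entry: "z * ln (z / (B i / ?m)) \<le> z * ln ?m" if "0 \<le> z" "z \<le> B i" for z i
  proof (cases "z = 0")
    case False
    with that have z: "0 < z" by simp
    have "z / (B i / ?m) = ?m * (z / B i)"
      by simp
    also have "\<dots> \<le> ?m"
      using that B_pos[of i] by (intro mult_left_le) auto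
    finally have "z / (B i / ?m) \<le> ?m" .
    with z B_pos[of i] show ?thesis
      by (intro mult_left_mono) auto
  qed simp
  have "bid_kl u ud (\<lambda>i j. B i / ?m) (\<lambda>i. B i / ?m)
      \<le> (\<Sum>i\<in>UNIV. \<Sum>j\<in>UNIV. u i j * ln ?m) + (\<Sum>i\<in>UNIV. ud i * ln ?m)"
    unfolding bid_kl_def using u qls_feasible_le_budget[OF u]
    by (intro add_mono sum_mono entry) (auto simp: qls_feasible_def)
  also have "\<dots> = (\<Sum>i\<in>UNIV. ((\<Sum>j\<in>UNIV. u i j) + ud i) * ln ?m)"
    by (simp add: sum.distrib sum_distrib_right distrib_right)
  also have "\<dots> = (\<Sum>i\<in>UNIV. B i) * ln ?m"
    using u by (simp add: qls_feasible_def sum_distrib_right)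
  finally show ?thesis .
qed

theorem theorem7:
  fixes v :: "'i::finite \<Rightarrow> 'j::finite \<Rightarrow> real"
    and B :: "'i \<Rightarrow> real"
    and bopt :: "'i \<Rightarrow> 'j \<Rightarrow> real" and dopt :: "'i \<Rightarrow> real"
    and b :: "nat \<Rightarrow> 'i \<Rightarrow> 'j \<Rightarrow> real" and d :: "nat \<Rightarrow> 'i \<Rightarrow> real"
    and t :: nat
  assumes v_pos: "\<And>i j. 0 < v i j"
    and B_pos: "\<And>i. 0 < B i"
    and opt_feas: "qls_feasible B bopt dopt"
    and opt_min: "\<And>b' d'. qls_feasible B b' d' \<Longrightarrow> qls_phi v bopt \<le> qls_phi v b'"
    and init_b: "\<And>i j. b 0 i j = B i / (real CARD('j) + 1)"
    and init_d: "\<And>i. d 0 i = B i / (real CARD('j) + 1)"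
    and step_feas: "\<And>s. qls_feasible B (b (Suc s)) (d (Suc s))"
    and step_min: "\<And>s b' d'. qls_feasible B b' d' \<Longrightarrow>
                     md_obj v (b s) (d s) (b (Suc s)) (d (Suc s)) \<le> md_obj v (b s) (d s) b' d'"
    and t_ge: "1 \<le> t"
  shows "gen_KL (qls_price (b t)) (qls_price bopt) \<le> qls_phi v (b t) - qls_phi v bopt
       \<and> qls_phi v (b t) - qls_phi v bopt
           \<le> (\<Sum>i\<in>UNIV. \<bar>B i\<bar>) * ln (real CARD('j) + 1) / real t"
proof
  let ?m = "real CARD('j) + 1" and ?K = "\<lambda>s. bid_kl bopt dopt (b s) (d s)"
  have b0: "b 0 = (\<lambda>i j. B i / ?m)" "d 0 = (\<lambda>i. B i / ?m)"
    using init_b init_d by auto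
  have feas: "qls_feasible B (b s) (d s)" for s
    using qls_feasible_uniform[of B] B_pos step_feas by (cases s) (auto simp: b0 less_imp_le)
  show "gen_KL (qls_price (b t)) (qls_price bopt) \<le> qls_phi v (b t) - qls_phi v bopt"
    by (rule qls_gen_KL_le_phi_gap[OF v_pos B_pos opt_feas opt_min feas])
  have pos: "(\<forall>i j. 0 < b s i j) \<and> (\<forall>i. 0 < d s i)" for s
  proof (rule md_iterates_pos[of B b d v, OF B_pos _ _ step_feas step_min])
    show "0 < b 0 i j" "0 < d 0 i" for i j
      using B_pos[of i] by (simp_all add: b0)
  qed
  have descent: "qls_phi v (b (Suc s))
      \<le> qls_phi v u + bid_kl u ud (b s) (d s) - bid_kl u ud (b (Suc s)) (d (Suc s))"
    if "qls_feasible B u ud" for s u ud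
    using md_descent[OF v_pos B_pos _ _ feas step_feas step_min that] pos by blast
  have "real t * (qls_phi v (b t) - qls_phi v bopt) \<le> ?K 0"
  proof (rule monotone_descent_rate)
    show "qls_phi v (b (Suc s)) \<le> qls_phi v (b s)" for s
      using descent[OF feas, of s s] bid_kl_nonneg[OF feas[of s] step_feas[of s]] pos[of "Suc s"]
      by (simp add: bid_kl_self)
    show "qls_phi v (b (Suc s)) \<le> qls_phi v bopt + ?K s - ?K (Suc s)" for s
      using descent[OF opt_feas] .
    show "0 \<le> ?K s" for s
      using bid_kl_nonneg[OF opt_feas feas] pos by blast
  qed
  also have "?K 0 \<le> (\<Sum>i\<in>UNIV. \<bar>B i\<bar>) * ln ?m"
    unfolding b0 using bid_kl_uniform_le[OF B_pos opt_feas] B_pos by (simp add: abs_of_pos)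
  finally show "qls_phi v (b t) - qls_phi v bopt \<le> (\<Sum>i\<in>UNIV. \<bar>B i\<bar>) * ln ?m / real t"
    using t_ge by (simp add: pos_le_divide_eq mult.commute)
qed

end
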